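(* Let $\bm A=(A_1,\dots,A_d)$ be Hermitian matrices in $M_n(\mathbb{C})$, $B\in M_n(\mathbb{C})$, and $(\bm\lambda,\nu)\in\mathbb{R}^d\times\mathbb{C}$. Suppose $(\bm\lambda,\nu)\in\dot\Lambda^{C}_{\epsilon_1}(\bm A,B)$ for some $\epsilon_1\ge0$, and that $$\sum_{i\neq k}\|[A_i,A_k]\|+\|F_{(\bm\lambda,\nu)}(\bm A,B)\|\le\epsilon_2$$ for some $\epsilon_2\ge0$. Then there is a unit vector $\bm\psi\in\mathbb{C}^n$ such that either $$\sqrt{\sum_{i=1}^d\|A_i\bm\psi-\lambda_i\bm\psi\|^2+\|B\bm\psi-\nu\bm\psi\|^2}\le\sqrt{2m}\,\sqrt{\epsilon_1^2+\epsilon_2}$$ or $$\sqrt{\sum_{i=1}^d\|A_i\bm\psi-\lambda_i\bm\psi\|^2+\|B^\dagger\bm\psi-\overline{\nu}\bm\psi\|^2}\le\sqrt{2m}\,\sqrt{\epsilon_1^2+\epsilon_2}.$$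
   Context: Let $n,d,m$ be positive integers. Fix Hermitian matrices $\Gamma_1,\dots,\Gamma_d\in M_{2m}(\mathbb{C})$ with $\Gamma_i^2=I_{2m}$ and $\Gamma_i\Gamma_j=-\Gamma_j\Gamma_i$ for $i\neq j$ (a Clifford representation; the paper uses a specific one built from Pauli matrices). Write $P=\begin{bmatrix} I_m&0\\0&0_m\end{bmatrix}$ and $Q=\begin{bmatrix}0_m&0\\0&I_m\end{bmatrix}$ in $M_{2m}(\mathbb{C})$. For a $d$-tuple $\bm A=(A_1,\dots,A_d)$ of Hermitian matrices in $M_n(\mathbb{C})$, a matrix $B\in M_n(\mathbb{C})$ (not necessarily Hermitian or normal), and a probe site $(\bm\lambda,\nu)\in\mathbb{R}^d\times\mathbb{C}$, the non-Hermitian spectral localizer is $$L_{(\bm\lambda,\nu)}(\bm A,B)=\sum_{i=1}^d (A_i-\lambda_i I)\otimes\Gamma_i+(B-\nu I)\otimes P-(B-\nu I)^\dagger\otimes Q\in M_{2mn}(\mathbb{C}).$$ The Clifford radial gap is $\dot\mu^{C}_{(\bm\lambda,\nu)}(\bm A,B)=\sigma_{\min}\big(L_{(\bm\lambda,\nu)}(\bm A,B)\big)$, and the Clifford radial $\epsilon$-pseudospectrum is $\dot\Lambda^{C}_\epsilon(\bm A,B)=\{(\bm\lambda,\nu)\in\mathbb{R}^d\times\mathbb{C}:\dot\mu^{C}_{(\bm\lambda,\nu)}(\bm A,B)\le\epsilon\}$. Define $$F_{(\bm\lambda,\nu)}(\bm A,B)=\sum_{i=1}^d\big(G_i+G_i^\dagger\big)-\sum_{i=1}^d\big(H_i+H_i^\dagger\big),\quad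 G_i=(A_i-\lambda_i I)(B-\nu I)\otimes\Gamma_iP,\quad H_i=(A_i-\lambda_i I)(B-\nu I)^\dagger\otimes\Gamma_iQ.$$ All matrix norms are operator norms; vector norms are Euclidean. *)

theory Defs
  imports Complex_Main "Jordan_Normal_Form.Matrix"
begin

definition adj :: "complex mat \<Rightarrow> complex mat" where
  "adj M = mat (dim_col M) (dim_row M) (\<lambda>(i,j). cnj (M $$ (j,i)))"

definition hermitian :: "complex mat \<Rightarrow> bool" where
  "hermitian M \<longleftrightarrow> dim_row M = dim_col M \<and> adj M = M"

definition kron :: "complex mat \<Rightarrow> complex mat \<Rightarrow> complex mat" where
  "kron X Y = mat (dim_row X * dim_row Y) (dim_col X * dim_col Y)
     (\<lambda>(i,j). X $$ (i div dim_row Y, j div dim_col Y) * Y $$ (i mod dim_row Y, j mod dim_col Y))"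

definition msum :: "nat \<Rightarrow> (nat \<Rightarrow> complex mat) \<Rightarrow> nat set \<Rightarrow> complex mat" where
  "msum N f I = mat N N (\<lambda>p. \<Sum>i\<in>I. f i $$ p)"

definition vnorm :: "complex vec \<Rightarrow> real" where
  "vnorm v = sqrt (\<Sum>i<dim_vec v. (cmod (v $ i))\<^sup>2)"

definition opnorm :: "complex mat \<Rightarrow> real" where
  "opnorm M = Sup {vnorm (M *\<^sub>v v) | v. v \<in> carrier_vec (dim_col M) \<and> vnorm v = 1}"

definition sigma_min :: "complex mat \<Rightarrow> real" where
  "sigma_min M = Inf {vnorm (M *\<^sub>v v) | v. v \<in> carrier_vec (dim_col M) \<and> vnorm v = 1}"

text \<open>Clifford representation Gamma 0..d-1 of Hermitian 2m x 2m matrices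
  (paper indices 1..d are shifted to 0..d-1).\<close>
definition clifford_rep :: "nat \<Rightarrow> nat \<Rightarrow> (nat \<Rightarrow> complex mat) \<Rightarrow> bool" where
  "clifford_rep m d \<Gamma> \<longleftrightarrow>
     (\<forall>i<d. \<Gamma> i \<in> carrier_mat (2*m) (2*m) \<and> hermitian (\<Gamma> i) \<and> \<Gamma> i * \<Gamma> i = 1\<^sub>m (2*m)) \<and>
     (\<forall>i<d. \<forall>j<d. i \<noteq> j \<longrightarrow> \<Gamma> i * \<Gamma> j = - (\<Gamma> j * \<Gamma> i))"

definition Pm :: "nat \<Rightarrow> complex mat" where
  "Pm m = mat (2*m) (2*m) (\<lambda>(i,j). if i = j \<and> i < m then 1 else 0)"

definition Qm :: "nat \<Rightarrow> complex mat" where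
  "Qm m = mat (2*m) (2*m) (\<lambda>(i,j). if i = j \<and> m \<le> i then 1 else 0)"

definition shiftA :: "nat \<Rightarrow> (nat \<Rightarrow> complex mat) \<Rightarrow> (nat \<Rightarrow> real) \<Rightarrow> nat \<Rightarrow> complex mat" where
  "shiftA n A lam i = A i - complex_of_real (lam i) \<cdot>\<^sub>m 1\<^sub>m n"

definition shiftB :: "nat \<Rightarrow> complex mat \<Rightarrow> complex \<Rightarrow> complex mat" where
  "shiftB n B \<nu> = B - \<nu> \<cdot>\<^sub>m 1\<^sub>m n"

definition localizer ::
  "nat \<Rightarrow> nat \<Rightarrow> nat \<Rightarrow> (nat \<Rightarrow> complex mat) \<Rightarrow> (nat \<Rightarrow> complex mat) \<Rightarrow> complex mat
   \<Rightarrow> (nat \<Rightarrow> real) \<Rightarrow> complex \<Rightarrow> complex mat" where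
  "localizer n d m \<Gamma> A B lam \<nu> =
     msum (2*m*n) (\<lambda>i. kron (shiftA n A lam i) (\<Gamma> i)) {..<d}
     + kron (shiftB n B \<nu>) (Pm m) - kron (adj (shiftB n B \<nu>)) (Qm m)"

definition clifford_radial_gap ::
  "nat \<Rightarrow> nat \<Rightarrow> nat \<Rightarrow> (nat \<Rightarrow> complex mat) \<Rightarrow> (nat \<Rightarrow> complex mat) \<Rightarrow> complex mat
   \<Rightarrow> (nat \<Rightarrow> real) \<Rightarrow> complex \<Rightarrow> real" where
  "clifford_radial_gap n d m \<Gamma> A B lam \<nu> = sigma_min (localizer n d m \<Gamma> A B lam \<nu>)"

text \<open>Clifford radial epsilon-pseudospectrum; probe sites are pairs (lambda, nu),
  where lambda only matters on 0..d-1 (we require it to vanish elsewhere).\<close>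
definition clifford_pseudospectrum ::
  "nat \<Rightarrow> nat \<Rightarrow> nat \<Rightarrow> (nat \<Rightarrow> complex mat) \<Rightarrow> real \<Rightarrow> (nat \<Rightarrow> complex mat) \<Rightarrow> complex mat
   \<Rightarrow> ((nat \<Rightarrow> real) \<times> complex) set" where
  "clifford_pseudospectrum n d m \<Gamma> \<epsilon> A B =
     {(lam, \<nu>). (\<forall>i\<ge>d. lam i = 0) \<and> clifford_radial_gap n d m \<Gamma> A B lam \<nu> \<le> \<epsilon>}"

definition Fmat ::
  "nat \<Rightarrow> nat \<Rightarrow> nat \<Rightarrow> (nat \<Rightarrow> complex mat) \<Rightarrow> (nat \<Rightarrow> complex mat) \<Rightarrow> complex mat
   \<Rightarrow> (nat \<Rightarrow> real) \<Rightarrow> complex \<Rightarrow> complex mat" where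
  "Fmat n d m \<Gamma> A B lam \<nu> =
     (let G = (\<lambda>i. kron (shiftA n A lam i * shiftB n B \<nu>) (\<Gamma> i * Pm m));
          H = (\<lambda>i. kron (shiftA n A lam i * adj (shiftB n B \<nu>)) (\<Gamma> i * Qm m))
      in msum (2*m*n) (\<lambda>i. G i + adj (G i)) {..<d} - msum (2*m*n) (\<lambda>i. H i + adj (H i)) {..<d})"

end

theory Submission
  imports Defs "HOL-Analysis.L2_Norm" "Jordan_Normal_Form.Determinant"
begin

text \<open>
  For a unit vector \<open>v\<close>, expand \<open>\<parallel>L v\<parallel>\<^sup>2\<close> and split \<open>v\<close> into its \<open>2m\<close> slices \<open>v\<^sub>l\<close> along the
  Clifford factor. Since the \<open>\<Gamma>\<^sub>i\<close> are Hermitian involutions, the diagonal terms give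
  \<open>\<Sum>\<^sub>i \<parallel>(A\<^sub>i - \<lambda>\<^sub>i) v\<^sub>l\<parallel>\<^sup>2\<close> on every slice, and \<open>P\<close>, \<open>Q\<close> contribute \<open>\<parallel>(B - \<nu>) v\<^sub>l\<parallel>\<^sup>2\<close> on the
  upper slices and \<open>\<parallel>(B - \<nu>)\<^sup>\<dagger> v\<^sub>l\<parallel>\<^sup>2\<close> on the lower ones. By anticommutation the off-diagonal
  \<open>\<Gamma>\<close>-terms pair up into \<open>[A\<^sub>i, A\<^sub>j] \<otimes> \<Gamma>\<^sub>i\<Gamma>\<^sub>j\<close> with \<open>\<Gamma>\<^sub>i\<Gamma>\<^sub>j\<close> unitary, and the mixed terms
  are exactly \<open>\<langle>v, F v\<rangle>\<close>. Hence the total slice energy is at most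
  \<open>\<parallel>L v\<parallel>\<^sup>2 + \<Sum>\<parallel>[A\<^sub>i, A\<^sub>k]\<parallel> + \<parallel>F\<parallel>\<close>, which is at most \<open>2(\<epsilon>\<^sub>1\<^sup>2 + \<epsilon>\<^sub>2)\<close> for a suitable \<open>v\<close>.
  Since \<open>\<Sum>\<^sub>l \<parallel>v\<^sub>l\<parallel>\<^sup>2 = 1\<close>, some nonzero slice has energy at most this bound times
  \<open>\<parallel>v\<^sub>l\<parallel>\<^sup>2\<close>; normalising it gives \<open>\<psi>\<close>, with the \<open>B\<close>- or the \<open>B\<^sup>\<dagger>\<close>-estimate according as the
  slice is an upper or a lower one.
\<close>

lemma exists_le_weighted:
  fixes q w :: "'a \<Rightarrow> real"
  assumes "finite I" and "\<And>l. l \<in> I \<Longrightarrow> 0 \<le> w l" and "\<And>l. l \<in> I \<Longrightarrow> 0 \<le> q l"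
    and "0 < sum w I"
    and "sum q I \<le> C * sum w I"
  shows "\<exists>l\<in>I. 0 < w l \<and> q l \<le> C * w l"
proof (rule ccontr)
  assume "\<not> ?thesis"
  then have less: "\<And>l. l \<in> I \<Longrightarrow> 0 < w l \<Longrightarrow> C * w l < q l" by fastforce
  obtain l0 where l0: "l0 \<in> I" "w l0 \<noteq> 0"
    using assms(4) sum.neutral[of I w] by (metis less_irrefl)
  then have "0 < w l0"
    using assms(2) by (simp add: less_le)
  have "C * w l \<le> q l" if "l \<in> I" for l
  proof (cases "w l = 0")
    case True
    then show ?thesis using assms(3)[OF that] by simp
  next
    case False
    then show ?thesis using less[OF that] assms(2)[OF that] by simp
  qed
  then have "(\<Sum>l\<in>I. C * w l) < sum q I"
    using less[OF l0(1) \<open>0 < w l0\<close>] l0(1) by (intro sum_strict_mono_ex1[OF assms(1)]) auto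
  with assms(5) show False by (simp add: sum_distrib_left)
qed

section \<open>Complex vectors and matrices\<close>

definition vinner :: "complex vec \<Rightarrow> complex vec \<Rightarrow> complex" where
  "vinner u w = (\<Sum>i<dim_vec w. cnj (u $ i) * w $ i)"

lemma vnorm_eq_L2_set: "vnorm w = L2_set (\<lambda>i. cmod (w $ i)) {..<dim_vec w}"
  unfolding vnorm_def L2_set_def ..

lemma vnorm_nonneg: "0 \<le> vnorm w"
  by (simp add: vnorm_eq_L2_set)

lemma power2_vnorm: "(vnorm w)\<^sup>2 = (\<Sum>i<dim_vec w. (cmod (w $ i))\<^sup>2)"
  unfolding vnorm_def by (simp add: sum_nonneg)

lemma vinner_self: "vinner w w = of_real ((vnorm w)\<^sup>2)"
  unfolding vinner_def power2_vnorm of_real_sum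
  by (intro sum.cong refl) (metis complex_norm_square mult.commute)

lemma cnj_vinner: "dim_vec u = dim_vec w \<Longrightarrow> cnj (vinner u w) = vinner w u"
  unfolding vinner_def by (simp add: mult.commute)

lemma vinner_add_right: "dim_vec a = dim_vec b \<Longrightarrow> vinner u (a + b) = vinner u a + vinner u b"
  unfolding vinner_def by (simp add: sum.distrib algebra_simps)

lemma vinner_diff_right: "dim_vec a = dim_vec b \<Longrightarrow> vinner u (a - b) = vinner u a - vinner u b"
  unfolding vinner_def by (simp add: sum_subtractf algebra_simps)

lemma vinner_diff_left:
  "dim_vec a = dim_vec w \<Longrightarrow> dim_vec b = dim_vec w \<Longrightarrow> vinner (a - b) w = vinner a w - vinner b w"
  unfolding vinner_def by (simp add: sum_subtractf algebra_simps)

lemma vinner_uminus_right: "vinner u (- w) = - vinner u w"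
  unfolding vinner_def by (simp add: sum_negf[symmetric])

lemma vinner_smult_right: "vinner u (c \<cdot>\<^sub>v w) = c * vinner u w"
  unfolding vinner_def by (simp add: sum_distrib_left mult_ac)

lemma index_mult_mat_vec_sum:
  "A \<in> carrier_mat r c \<Longrightarrow> v \<in> carrier_vec c \<Longrightarrow> i < r \<Longrightarrow> (A *\<^sub>v v) $ i = (\<Sum>j<c. A $$ (i, j) * v $ j)"
  by (simp add: scalar_prod_def atLeast0LessThan)

lemma cmod_sum_mult_le_L2_set:
  "cmod (\<Sum>i\<in>I. a i * b i) \<le> L2_set (\<lambda>i. cmod (a i)) I * L2_set (\<lambda>i. cmod (b i)) I"
proof -
  have "cmod (\<Sum>i\<in>I. a i * b i) \<le> (\<Sum>i\<in>I. \<bar>cmod (a i)\<bar> * \<bar>cmod (b i)\<bar>)"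
    using norm_sum[of "\<lambda>i. a i * b i" I] by (simp add: norm_mult)
  also have "\<dots> \<le> L2_set (\<lambda>i. cmod (a i)) I * L2_set (\<lambda>i. cmod (b i)) I"
    by (rule L2_set_mult_ineq)
  finally show ?thesis .
qed

lemma vinner_cauchy_schwarz: "dim_vec u = dim_vec w \<Longrightarrow> cmod (vinner u w) \<le> vnorm u * vnorm w"
  using cmod_sum_mult_le_L2_set[of "\<lambda>i. cnj (u $ i)" "\<lambda>i. w $ i" "{..<dim_vec w}"]
  unfolding vinner_def vnorm_eq_L2_set by simp

lemma vnorm_smult: "vnorm (c \<cdot>\<^sub>v w) = cmod c * vnorm w"
  unfolding vnorm_def
  by (simp add: norm_mult power_mult_distrib sum_distrib_left[symmetric] real_sqrt_mult)

lemma vnorm_eq_0_imp_zero: "vnorm w = 0 \<Longrightarrow> w = 0\<^sub>v (dim_vec w)"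
  unfolding vnorm_def by (intro eq_vecI) (simp_all add: sum_nonneg_eq_0_iff)

lemma vnorm_zero_vec[simp]: "vnorm (0\<^sub>v N) = 0"
  by (simp add: vnorm_def)

lemma vnorm_normalize: "vnorm w \<noteq> 0 \<Longrightarrow> vnorm (complex_of_real (1 / vnorm w) \<cdot>\<^sub>v w) = 1"
  using vnorm_nonneg[of w] by (simp add: vnorm_smult norm_divide)

lemma vnorm_unit_vec: "i < N \<Longrightarrow> vnorm (unit_vec N i :: complex vec) = 1"
  unfolding vnorm_def by (simp add: unit_vec_def if_distrib[of "\<lambda>x. (cmod x)\<^sup>2"] cong: if_cong)

section \<open>Operator norm and smallest singular value\<close>

definition frobenius_norm :: "complex mat \<Rightarrow> real" where
  "frobenius_norm M = sqrt (\<Sum>i<dim_row M. \<Sum>j<dim_col M. (cmod (M $$ (i, j)))\<^sup>2)"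

lemma frobenius_norm_nonneg: "0 \<le> frobenius_norm M"
  unfolding frobenius_norm_def by (simp add: sum_nonneg)

lemma vnorm_mult_vec_le_frobenius:
  assumes "w \<in> carrier_vec (dim_col M)"
  shows "vnorm (M *\<^sub>v w) \<le> frobenius_norm M * vnorm w"
proof -
  have "(vnorm (M *\<^sub>v w))\<^sup>2 = (\<Sum>i<dim_row M. (cmod (\<Sum>j<dim_col M. M $$ (i, j) * w $ j))\<^sup>2)"
    unfolding power2_vnorm using assms
    by (intro sum.cong) (auto simp: scalar_prod_def atLeast0LessThan)
  also have "\<dots> \<le> (\<Sum>i<dim_row M. (L2_set (\<lambda>j. cmod (M $$ (i, j))) {..<dim_col M} * vnorm w)\<^sup>2)"
  proof (intro sum_mono power_mono norm_ge_zero)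
    fix i
    show "cmod (\<Sum>j<dim_col M. M $$ (i, j) * w $ j)
      \<le> L2_set (\<lambda>j. cmod (M $$ (i, j))) {..<dim_col M} * vnorm w"
      using cmod_sum_mult_le_L2_set[of "\<lambda>j. M $$ (i, j)" "\<lambda>j. w $ j"] assms
      by (simp add: vnorm_eq_L2_set)
  qed
  also have "\<dots> = (frobenius_norm M * vnorm w)\<^sup>2"
    unfolding frobenius_norm_def L2_set_def power_mult_distrib
    by (simp add: sum_distrib_right sum_nonneg)
  finally show ?thesis
    by (rule power2_le_imp_le) (simp add: frobenius_norm_nonneg vnorm_nonneg)
qed

lemma vnorm_mult_vec_le_opnorm:
  assumes w: "w \<in> carrier_vec (dim_col M)"
  shows "vnorm (M *\<^sub>v w) \<le> opnorm M * vnorm w"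
proof (cases "vnorm w = 0")
  case True
  then have "M *\<^sub>v w = 0\<^sub>v (dim_row M)"
    using vnorm_eq_0_imp_zero[of w] w by fastforce
  then show ?thesis
    using True by simp
next
  case False
  define u where "u = complex_of_real (1 / vnorm w) \<cdot>\<^sub>v w"
  have "vnorm (M *\<^sub>v u) \<le> opnorm M"
    unfolding opnorm_def
  proof (rule cSup_upper)
    show "vnorm (M *\<^sub>v u) \<in> {vnorm (M *\<^sub>v v) | v. v \<in> carrier_vec (dim_col M) \<and> vnorm v = 1}"
      using w vnorm_normalize[OF False] unfolding u_def by auto
    show "bdd_above {vnorm (M *\<^sub>v v) | v. v \<in> carrier_vec (dim_col M) \<and> vnorm v = 1}"
      using vnorm_mult_vec_le_frobenius by (intro bdd_aboveI[of _ "frobenius_norm M"]) fastforce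
  qed
  moreover have "M *\<^sub>v u = complex_of_real (1 / vnorm w) \<cdot>\<^sub>v (M *\<^sub>v w)"
    unfolding u_def using w by (intro mult_mat_vec) auto
  ultimately have "vnorm (M *\<^sub>v w) / vnorm w \<le> opnorm M"
    using vnorm_nonneg[of w] by (simp add: vnorm_smult norm_divide)
  then show ?thesis
    using False vnorm_nonneg[of w] by (simp add: divide_le_eq mult.commute)
qed

lemma opnorm_nonneg:
  assumes "0 < dim_col M"
  shows "0 \<le> opnorm M"
proof -
  have "vnorm (M *\<^sub>v unit_vec (dim_col M) 0) \<le> opnorm M"
    using vnorm_mult_vec_le_opnorm[of "unit_vec (dim_col M) 0" M] vnorm_unit_vec[OF assms] by simp
  then show ?thesis
    using vnorm_nonneg order_trans by blast
qed

lemma sigma_min_pos_if_det_nonzero: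
  assumes L: "L \<in> carrier_mat N N" and "0 < N" and "det L \<noteq> 0"
  shows "0 < sigma_min L"
proof -
  obtain M where M: "M \<in> carrier_mat N N" "M * L = 1\<^sub>m N"
    using det_non_zero_imp_unit[OF L \<open>det L \<noteq> 0\<close>, of "()"]
    unfolding Units_def ring_mat_simps by auto
  have lower: "1 \<le> frobenius_norm M * vnorm (L *\<^sub>v u)" if u: "u \<in> carrier_vec N" "vnorm u = 1" for u
  proof -
    have "M *\<^sub>v (L *\<^sub>v u) = u"
      using M L u by (simp add: assoc_mult_mat_vec[symmetric])
    then show ?thesis
      using vnorm_mult_vec_le_frobenius[of "L *\<^sub>v u" M] M L u by simp
  qed
  have "1 \<le> frobenius_norm M * vnorm (L *\<^sub>v unit_vec N 0)"
    using lower[OF unit_vec_carrier vnorm_unit_vec[OF \<open>0 < N\<close>]] .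
  then have pos: "0 < frobenius_norm M"
    using frobenius_norm_nonneg[of M] by (cases "frobenius_norm M = 0") auto
  have "1 / frobenius_norm M \<le> sigma_min L"
    unfolding sigma_min_def
  proof (rule cInf_greatest)
    show "{vnorm (L *\<^sub>v v) | v. v \<in> carrier_vec (dim_col L) \<and> vnorm v = 1} \<noteq> {}"
      using L vnorm_unit_vec[OF \<open>0 < N\<close>] unit_vec_carrier by blast
  next
    fix x assume "x \<in> {vnorm (L *\<^sub>v v) | v. v \<in> carrier_vec (dim_col L) \<and> vnorm v = 1}"
    then show "1 / frobenius_norm M \<le> x"
      using L lower pos by (auto simp: divide_le_eq mult.commute)
  qed
  moreover have "0 < 1 / frobenius_norm M"
    using pos by simp
  ultimately show ?thesis
    by linarith
qed

text \<open>\<open>sigma_min\<close> is an infimum that we do not show to be attained: the factor 2 leaves room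
  for an approximate minimiser, and for \<open>e = 0\<close> a kernel vector is obtained from \<open>det L = 0\<close>.\<close>
lemma exists_unit_vec_le_sigma_min:
  assumes L: "L \<in> carrier_mat N N" and "0 < N" and "0 \<le> e" and "sigma_min L \<le> e"
  shows "\<exists>v\<in>carrier_vec N. vnorm v = 1 \<and> (vnorm (L *\<^sub>v v))\<^sup>2 \<le> 2 * e\<^sup>2"
proof (cases "e = 0")
  case True
  then have "det L = 0"
    using sigma_min_pos_if_det_nonzero[OF L \<open>0 < N\<close>] \<open>sigma_min L \<le> e\<close> by linarith
  then obtain w where w: "w \<in> carrier_vec N" "w \<noteq> 0\<^sub>v N" "L *\<^sub>v w = 0\<^sub>v N"
    using det_0_iff_vec_prod_zero[OF L] by blast
  then have "vnorm w \<noteq> 0"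
    using vnorm_eq_0_imp_zero by fastforce
  define v where "v = complex_of_real (1 / vnorm w) \<cdot>\<^sub>v w"
  have "vnorm (L *\<^sub>v v) = 0"
    unfolding v_def using L w by (simp add: mult_mat_vec vnorm_smult)
  then show ?thesis
    using w vnorm_normalize[OF \<open>vnorm w \<noteq> 0\<close>] True unfolding v_def by auto
next
  case False
  then have "e * 1 < e * sqrt 2"
    using \<open>0 \<le> e\<close> by (intro mult_strict_left_mono) auto
  then have "sigma_min L < sqrt 2 * e"
    using \<open>sigma_min L \<le> e\<close> by (simp add: mult.commute)
  moreover have "{vnorm (L *\<^sub>v v) | v. v \<in> carrier_vec (dim_col L) \<and> vnorm v = 1} \<noteq> {}"
    using L vnorm_unit_vec[OF \<open>0 < N\<close>] unit_vec_carrier by blast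
  ultimately have "\<exists>x\<in>{vnorm (L *\<^sub>v v) | v. v \<in> carrier_vec (dim_col L) \<and> vnorm v = 1}. x < sqrt 2 * e"
    unfolding sigma_min_def by (rule cInf_lessD[rotated])
  then obtain v where v: "v \<in> carrier_vec N" "vnorm v = 1" "vnorm (L *\<^sub>v v) < sqrt 2 * e"
    using L by auto
  then have "(vnorm (L *\<^sub>v v))\<^sup>2 \<le> (sqrt 2 * e)\<^sup>2"
    using vnorm_nonneg by (intro power_mono) auto
  with v show ?thesis
    by (auto simp: power_mult_distrib)
qed

section \<open>Adjoints and scalar shifts\<close>

lemma adj_carrier: "X \<in> carrier_mat r c \<Longrightarrow> adj X \<in> carrier_mat c r"
  unfolding adj_def by auto

lemma dim_adj[simp]: "dim_row (adj X) = dim_col X" "dim_col (adj X) = dim_row X"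
  unfolding adj_def by auto

lemma index_adj[simp]: "i < dim_col X \<Longrightarrow> j < dim_row X \<Longrightarrow> adj X $$ (i, j) = cnj (X $$ (j, i))"
  unfolding adj_def by auto

lemma adj_adj[simp]: "adj (adj X) = X"
  by (rule eq_matI) auto

lemma adj_one[simp]: "adj (1\<^sub>m n) = 1\<^sub>m n"
  by (rule eq_matI) auto

lemma adj_mat_diag: "adj (mat_diag n f) = mat_diag n (\<lambda>i. cnj (f i))"
  by (rule eq_matI) (auto simp: mat_diag_def)

lemma adj_mult: "X \<in> carrier_mat r c \<Longrightarrow> Y \<in> carrier_mat c s \<Longrightarrow> adj (X * Y) = adj Y * adj X"
  by (intro eq_matI) (auto simp: scalar_prod_def cnj_sum mult.commute)

lemma vinner_adj_right:
  assumes "M \<in> carrier_mat r c" and "u \<in> carrier_vec c" and "w \<in> carrier_vec r"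
  shows "vinner u (adj M *\<^sub>v w) = vinner (M *\<^sub>v u) w"
proof -
  have "vinner u (adj M *\<^sub>v w) = (\<Sum>j<c. \<Sum>i<r. cnj (u $ j) * (cnj (M $$ (i, j)) * w $ i))"
    unfolding vinner_def using assms
    by (intro sum.cong refl) (auto simp: scalar_prod_def atLeast0LessThan sum_distrib_left)
  also have "\<dots> = vinner (M *\<^sub>v u) w"
    unfolding vinner_def using assms
    by (subst sum.swap) (auto simp: scalar_prod_def atLeast0LessThan sum_distrib_left sum_distrib_right cnj_sum
        mult_ac intro!: sum.cong)
  finally show ?thesis .
qed

lemma adj_shift:
  "X \<in> carrier_mat n n \<Longrightarrow> adj (X - c \<cdot>\<^sub>m 1\<^sub>m n) = adj X - cnj c \<cdot>\<^sub>m 1\<^sub>m n"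
  by (intro eq_matI) auto

lemma shift_mult_vec:
  fixes X :: "complex mat"
  assumes "X \<in> carrier_mat n n" and "w \<in> carrier_vec n"
  shows "(X - c \<cdot>\<^sub>m 1\<^sub>m n) *\<^sub>v w = X *\<^sub>v w - c \<cdot>\<^sub>v w"
proof -
  have "(c \<cdot>\<^sub>m 1\<^sub>m n) *\<^sub>v w = c \<cdot>\<^sub>v w"
  proof (rule eq_vecI)
    fix i assume "i < dim_vec (c \<cdot>\<^sub>v w)"
    then have "i < n"
      using assms(2) by simp
    have "((c \<cdot>\<^sub>m 1\<^sub>m n) *\<^sub>v w) $ i = (\<Sum>j<n. c * (if j = i then 1 else 0) * w $ j)"
      using \<open>i < n\<close> assms(2) by (simp add: scalar_prod_def atLeast0LessThan)
    also have "\<dots> = (\<Sum>j<n. if j = i then c * w $ i else 0)"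
      by (intro sum.cong) auto
    finally show "((c \<cdot>\<^sub>m 1\<^sub>m n) *\<^sub>v w) $ i = (c \<cdot>\<^sub>v w) $ i"
      using \<open>i < n\<close> assms(2) by simp
  qed (use assms(2) in simp)
  then show ?thesis
    using assms minus_mult_distrib_mat_vec[of X n n "c \<cdot>\<^sub>m 1\<^sub>m n" w]
    by simp
qed

lemma power2_vnorm_shift_smult:
  fixes M :: "complex mat"
  assumes "M \<in> carrier_mat n n" and "w \<in> carrier_vec n"
  shows "(vnorm (M *\<^sub>v (complex_of_real r \<cdot>\<^sub>v w) - c \<cdot>\<^sub>v (complex_of_real r \<cdot>\<^sub>v w)))\<^sup>2
    = r\<^sup>2 * (vnorm ((M - c \<cdot>\<^sub>m 1\<^sub>m n) *\<^sub>v w))\<^sup>2"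
proof -
  have "M *\<^sub>v (complex_of_real r \<cdot>\<^sub>v w) - c \<cdot>\<^sub>v (complex_of_real r \<cdot>\<^sub>v w)
      = (M - c \<cdot>\<^sub>m 1\<^sub>m n) *\<^sub>v (complex_of_real r \<cdot>\<^sub>v w)"
    using assms by (simp add: shift_mult_vec)
  also have "\<dots> = complex_of_real r \<cdot>\<^sub>v ((M - c \<cdot>\<^sub>m 1\<^sub>m n) *\<^sub>v w)"
    using assms by (intro mult_mat_vec) auto
  finally show ?thesis
    by (simp add: vnorm_smult power_mult_distrib)
qed

lemma commutator_shift:
  fixes X Y :: "complex mat"
  assumes X: "X \<in> carrier_mat n n" and Y: "Y \<in> carrier_mat n n"
  shows "(X - c \<cdot>\<^sub>m 1\<^sub>m n) * (Y - e \<cdot>\<^sub>m 1\<^sub>m n) - (Y - e \<cdot>\<^sub>m 1\<^sub>m n) * (X - c \<cdot>\<^sub>m 1\<^sub>m n)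
    = X * Y - Y * X"
proof -
  have expand: "(Z - a \<cdot>\<^sub>m 1\<^sub>m n) * (W - b \<cdot>\<^sub>m 1\<^sub>m n)
      = Z * W - b \<cdot>\<^sub>m Z - a \<cdot>\<^sub>m W + (a * b) \<cdot>\<^sub>m 1\<^sub>m n"
    if "Z \<in> carrier_mat n n" "W \<in> carrier_mat n n" for Z W :: "complex mat" and a b
  proof -
    have I: "a \<cdot>\<^sub>m 1\<^sub>m n \<in> carrier_mat n n" "b \<cdot>\<^sub>m 1\<^sub>m n \<in> carrier_mat n n" by auto
    have "(Z - a \<cdot>\<^sub>m 1\<^sub>m n) * (W - b \<cdot>\<^sub>m 1\<^sub>m n)
        = (Z - a \<cdot>\<^sub>m 1\<^sub>m n) * W - (Z - a \<cdot>\<^sub>m 1\<^sub>m n) * (b \<cdot>\<^sub>m 1\<^sub>m n)"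
      using that I by (intro mult_minus_distrib_mat) auto
    also have "(Z - a \<cdot>\<^sub>m 1\<^sub>m n) * W = Z * W - a \<cdot>\<^sub>m W"
      using that I by (simp add: minus_mult_distrib_mat[of _ n n] mult_smult_assoc_mat[of _ n n])
    also have "(Z - a \<cdot>\<^sub>m 1\<^sub>m n) * (b \<cdot>\<^sub>m 1\<^sub>m n) = b \<cdot>\<^sub>m Z - (a * b) \<cdot>\<^sub>m 1\<^sub>m n"
      using that by (intro eq_matI) (auto simp: mult_smult_distrib[of _ n n] algebra_simps)
    finally show ?thesis
      using that by (intro eq_matI) (auto simp: algebra_simps)
  qed
  show ?thesis
    unfolding expand[OF X Y] expand[OF Y X] using X Y by (intro eq_matI) (simp_all add: algebra_simps)
qed

section \<open>Kronecker products\<close>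

lemma sum_lessThan_mult:
  fixes f :: "nat \<Rightarrow> 'a :: comm_monoid_add"
  shows "(\<Sum>p < n * k. f p) = (\<Sum>b<n. \<Sum>l<k. f (b * k + l))"
proof -
  have "(\<Sum>l<k. f (b * k + l)) = sum f {b * k..<b * k + k}" for b
    using sum.shift_bounds_nat_ivl[of f 0 "b * k" k] by (simp add: lessThan_atLeast0 add.commute)
  then show ?thesis
    by (simp add: sum.nat_group)
qed

lemma kron_carrier:
  "X \<in> carrier_mat r c \<Longrightarrow> Y \<in> carrier_mat r' c' \<Longrightarrow> kron X Y \<in> carrier_mat (r * r') (c * c')"
  unfolding kron_def by auto

lemma dim_kron[simp]:
  "dim_row (kron X Y) = dim_row X * dim_row Y" "dim_col (kron X Y) = dim_col X * dim_col Y"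
  unfolding kron_def by auto

lemma index_kron:
  "i < dim_row X * dim_row Y \<Longrightarrow> j < dim_col X * dim_col Y \<Longrightarrow>
   kron X Y $$ (i, j) = X $$ (i div dim_row Y, j div dim_col Y) * Y $$ (i mod dim_row Y, j mod dim_col Y)"
  unfolding kron_def by auto

lemma mult_add_less: "a < n \<Longrightarrow> l < k \<Longrightarrow> a * k + l < n * (k :: nat)"
proof -
  assume "a < n" "l < k"
  then have "a * k + l < Suc a * k"
    by simp
  also have "\<dots> \<le> n * k"
    using \<open>a < n\<close> by (intro mult_le_mono1) simp
  finally show ?thesis .
qed

lemma div_mod_less_mult: "i < a * (b :: nat) \<Longrightarrow> i div b < a \<and> i mod b < b"
  by (cases "b = 0") (auto simp: less_mult_imp_div_less)

lemma kron_mult: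
  assumes "X \<in> carrier_mat r s" "Y \<in> carrier_mat r' s'" "Z \<in> carrier_mat s t" "W \<in> carrier_mat s' t'"
  shows "kron X Y * kron Z W = kron (X * Z) (Y * W)"
proof (rule eq_matI)
  fix i j assume "i < dim_row (kron (X * Z) (Y * W))" "j < dim_col (kron (X * Z) (Y * W))"
  then have i: "i < r * r'" and j: "j < t * t'"
    using assms by auto
  have "(kron X Y * kron Z W) $$ (i, j)
      = (\<Sum>p < s * s'. kron X Y $$ (i, p) * kron Z W $$ (p, j))"
    using assms i j by (simp add: scalar_prod_def atLeast0LessThan)
  also have "\<dots> = (\<Sum>b<s. \<Sum>l<s'. (X $$ (i div r', b) * Z $$ (b, j div t'))
      * (Y $$ (i mod r', l) * W $$ (l, j mod t')))"
    unfolding sum_lessThan_mult using assms i j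
    by (intro sum.cong refl) (auto simp: index_kron mult_add_less mult_ac)
  also have "\<dots> = (X * Z) $$ (i div r', j div t') * (Y * W) $$ (i mod r', j mod t')"
    using assms div_mod_less_mult[OF i] div_mod_less_mult[OF j]
    by (simp add: sum_product[symmetric] scalar_prod_def atLeast0LessThan)
  also have "\<dots> = kron (X * Z) (Y * W) $$ (i, j)"
    using assms i j by (simp add: index_kron)
  finally show "(kron X Y * kron Z W) $$ (i, j) = kron (X * Z) (Y * W) $$ (i, j)" .
qed (use assms in auto)

lemma adj_kron: "adj (kron X Y) = kron (adj X) (adj Y)"
proof (rule eq_matI)
  fix i j assume "i < dim_row (kron (adj X) (adj Y))" "j < dim_col (kron (adj X) (adj Y))"
  then have "i < dim_col X * dim_col Y" "j < dim_row X * dim_row Y"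
    by auto
  with div_mod_less_mult[OF this(1)] div_mod_less_mult[OF this(2)]
  show "adj (kron X Y) $$ (i, j) = kron (adj X) (adj Y) $$ (i, j)"
    by (simp add: index_kron)
qed auto

lemma kron_diff_left:
  assumes "X \<in> carrier_mat r c" "X' \<in> carrier_mat r c"
  shows "kron (X - X') Y = kron X Y - kron X' Y"
proof (rule eq_matI)
  fix i j assume "i < dim_row (kron X Y - kron X' Y)" "j < dim_col (kron X Y - kron X' Y)"
  with assms have "i < r * dim_row Y" "j < c * dim_col Y"
    by auto
  with assms div_mod_less_mult[OF this(1)] div_mod_less_mult[OF this(2)]
  show "kron (X - X') Y $$ (i, j) = (kron X Y - kron X' Y) $$ (i, j)"
    by (simp add: index_kron algebra_simps)
qed (use assms in auto)

lemma kron_uminus_right: "kron X (- Y) = - kron X Y"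
proof (rule eq_matI)
  fix i j assume "i < dim_row (- kron X Y)" "j < dim_col (- kron X Y)"
  then have "i < dim_row X * dim_row Y" "j < dim_col X * dim_col Y"
    by auto
  with div_mod_less_mult[OF this(1)] div_mod_less_mult[OF this(2)]
  show "kron X (- Y) $$ (i, j) = (- kron X Y) $$ (i, j)"
    by (simp add: index_kron)
qed auto

text \<open>Viewing \<open>v\<close> as an element of \<open>\<complex>\<^sup>n \<otimes> \<complex>\<^sup>k\<close>, it is the sum of the
  \<open>slice n k v l \<otimes> e\<^sub>l\<close>.\<close>
definition slice :: "nat \<Rightarrow> nat \<Rightarrow> complex vec \<Rightarrow> nat \<Rightarrow> complex vec" where
  "slice n k v l = vec n (\<lambda>b. v $ (b * k + l))"

lemma slice_carrier[simp]: "slice n k v l \<in> carrier_vec n"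
  unfolding slice_def by simp

lemma vinner_eq_sum_slice:
  assumes "u \<in> carrier_vec (n * k)" "w \<in> carrier_vec (n * k)"
  shows "vinner u w = (\<Sum>l<k. vinner (slice n k u l) (slice n k w l))"
  using assms unfolding vinner_def slice_def
  by (simp add: sum_lessThan_mult) (rule sum.swap)

lemma power2_vnorm_eq_sum_slice:
  assumes "v \<in> carrier_vec (n * k)"
  shows "(vnorm v)\<^sup>2 = (\<Sum>l<k. (vnorm (slice n k v l))\<^sup>2)"
  using vinner_eq_sum_slice[OF assms assms] by (simp add: vinner_self del: of_real_power flip: of_real_sum)

lemma slice_kron_mat_diag_mult_vec:
  assumes M: "M \<in> carrier_mat n n" and v: "v \<in> carrier_vec (n * k)" and l: "l < k"
  shows "slice n k (kron M (mat_diag k f) *\<^sub>v v) l = f l \<cdot>\<^sub>v (M *\<^sub>v slice n k v l)"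
proof (rule eq_vecI)
  fix a assume "a < dim_vec (f l \<cdot>\<^sub>v (M *\<^sub>v slice n k v l))"
  then have a: "a < n"
    using M by simp
  have "(kron M (mat_diag k f) *\<^sub>v v) $ (a * k + l)
      = (\<Sum>p<n * k. kron M (mat_diag k f) $$ (a * k + l, p) * v $ p)"
    using kron_carrier[OF M mat_diag_dim] v mult_add_less[OF a l] by (rule index_mult_mat_vec_sum)
  also have "\<dots> = (\<Sum>b<n. \<Sum>l'<k. kron M (mat_diag k f) $$ (a * k + l, b * k + l') * v $ (b * k + l'))"
    by (rule sum_lessThan_mult)
  also have "\<dots> = (\<Sum>b<n. \<Sum>l'<k. M $$ (a, b) * (if l = l' then f l' else 0) * v $ (b * k + l'))"
    using M a l by (intro sum.cong refl) (simp add: index_kron mult_add_less mat_diag_def)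
  also have "\<dots> = (\<Sum>b<n. \<Sum>l'<k. if l = l' then f l * (M $$ (a, b) * v $ (b * k + l)) else 0)"
    by (intro sum.cong refl) auto
  also have "\<dots> = f l * (\<Sum>b<n. M $$ (a, b) * v $ (b * k + l))"
    using l by (simp add: sum_distrib_left)
  finally show "slice n k (kron M (mat_diag k f) *\<^sub>v v) l $ a = (f l \<cdot>\<^sub>v (M *\<^sub>v slice n k v l)) $ a"
    using M a by (simp add: slice_def scalar_prod_def atLeast0LessThan)
qed (use M in simp)

lemma vinner_kron_mult_vec:
  assumes X: "X \<in> carrier_mat r n" and Y: "Y \<in> carrier_mat r' k"
    and Z: "Z \<in> carrier_mat r n" and W: "W \<in> carrier_mat r' k" and v: "v \<in> carrier_vec (n * k)"
  shows "vinner (kron X Y *\<^sub>v v) (kron Z W *\<^sub>v v) = vinner v (kron (adj X * Z) (adj Y * W) *\<^sub>v v)"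
proof -
  have K: "kron X Y \<in> carrier_mat (r * r') (n * k)" "kron Z W \<in> carrier_mat (r * r') (n * k)"
    using X Y Z W by (auto intro: kron_carrier)
  have "vinner (kron X Y *\<^sub>v v) (kron Z W *\<^sub>v v) = vinner v (adj (kron X Y) *\<^sub>v (kron Z W *\<^sub>v v))"
    using K v by (intro vinner_adj_right[symmetric]) auto
  also have "\<dots> = vinner v ((adj (kron X Y) * kron Z W) *\<^sub>v v)"
    using K v adj_carrier[OF K(1)] by (simp add: assoc_mult_mat_vec)
  also have "adj (kron X Y) * kron Z W = kron (adj X * Z) (adj Y * W)"
    unfolding adj_kron by (rule kron_mult[OF adj_carrier[OF X] adj_carrier[OF Y] Z W])
  finally show ?thesis .
qed

lemma vinner_kron_mat_diag:
  assumes M: "M \<in> carrier_mat n n" and v: "v \<in> carrier_vec (n * k)"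
  shows "vinner v (kron M (mat_diag k f) *\<^sub>v v)
    = (\<Sum>l<k. f l * vinner (slice n k v l) (M *\<^sub>v slice n k v l))"
proof -
  have "kron M (mat_diag k f) *\<^sub>v v \<in> carrier_vec (n * k)"
    using kron_carrier[OF M mat_diag_dim[of k f]] v by auto
  then show ?thesis
    using M v by (simp add: vinner_eq_sum_slice slice_kron_mat_diag_mult_vec vinner_smult_right)
qed

lemma vinner_kron_mult_vec_diag:
  assumes X: "X \<in> carrier_mat r n" and Y: "Y \<in> carrier_mat r' k"
    and Z: "Z \<in> carrier_mat r n" and W: "W \<in> carrier_mat r' k" and v: "v \<in> carrier_vec (n * k)"
    and diag: "adj Y * W = mat_diag k f"
  shows "vinner (kron X Y *\<^sub>v v) (kron Z W *\<^sub>v v)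
    = (\<Sum>l<k. f l * vinner (X *\<^sub>v slice n k v l) (Z *\<^sub>v slice n k v l))"
proof -
  have XZ: "adj X * Z \<in> carrier_mat n n"
    using adj_carrier[OF X] Z by auto
  have "vinner (slice n k v l) ((adj X * Z) *\<^sub>v slice n k v l)
      = vinner (X *\<^sub>v slice n k v l) (Z *\<^sub>v slice n k v l)" for l
    using X Z adj_carrier[OF X] by (simp add: assoc_mult_mat_vec vinner_adj_right)
  then show ?thesis
    using vinner_kron_mult_vec[OF X Y Z W v] vinner_kron_mat_diag[OF XZ v] diag by simp
qed

lemma power2_vnorm_kron_mult_vec:
  assumes X: "X \<in> carrier_mat r n" and Y: "Y \<in> carrier_mat r' k" and v: "v \<in> carrier_vec (n * k)"
    and isometry: "adj Y * Y = 1\<^sub>m k"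
  shows "(vnorm (kron X Y *\<^sub>v v))\<^sup>2 = (\<Sum>l<k. (vnorm (X *\<^sub>v slice n k v l))\<^sup>2)"
proof -
  have "adj Y * Y = mat_diag k (\<lambda>_. 1)"
    using isometry by simp
  from vinner_kron_mult_vec_diag[OF X Y X Y v this]
  show ?thesis
    by (simp add: vinner_self del: of_real_power flip: of_real_sum)
qed

lemma cmod_vinner_kron_unitary_le:
  assumes C: "C \<in> carrier_mat n n" and U: "U \<in> carrier_mat k k" and unitary: "U * adj U = 1\<^sub>m k"
    and v: "v \<in> carrier_vec (n * k)" and "0 < n"
  shows "cmod (vinner v (kron C U *\<^sub>v v)) \<le> opnorm C * (vnorm v)\<^sup>2"
proof -
  let ?a = "kron (1\<^sub>m n) (adj U) *\<^sub>v v" and ?b = "kron C (1\<^sub>m k) *\<^sub>v v"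
  have "vinner ?a ?b = vinner v (kron C U *\<^sub>v v)"
    using vinner_kron_mult_vec[OF one_carrier_mat adj_carrier[OF U] C one_carrier_mat v] C U by simp
  have "(vnorm ?a)\<^sup>2 = (vnorm v)\<^sup>2"
    using power2_vnorm_kron_mult_vec[OF one_carrier_mat adj_carrier[OF U] v] unitary
      power2_vnorm_eq_sum_slice[OF v] by simp
  then have "vnorm ?a = vnorm v"
    using vnorm_nonneg by (simp add: power2_eq_iff_nonneg)
  have "(vnorm ?b)\<^sup>2 \<le> (opnorm C * vnorm v)\<^sup>2"
  proof -
    have "(vnorm ?b)\<^sup>2 = (\<Sum>l<k. (vnorm (C *\<^sub>v slice n k v l))\<^sup>2)"
      using power2_vnorm_kron_mult_vec[OF C one_carrier_mat v] by simp
    also have "\<dots> \<le> (\<Sum>l<k. (opnorm C * vnorm (slice n k v l))\<^sup>2)"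
    proof (intro sum_mono power_mono vnorm_nonneg)
      fix l show "vnorm (C *\<^sub>v slice n k v l) \<le> opnorm C * vnorm (slice n k v l)"
        using C by (intro vnorm_mult_vec_le_opnorm) simp
    qed
    also have "\<dots> = (opnorm C * vnorm v)\<^sup>2"
      using power2_vnorm_eq_sum_slice[OF v] by (simp add: power_mult_distrib sum_distrib_left)
    finally show ?thesis .
  qed
  moreover have "0 \<le> opnorm C * vnorm v"
    using C \<open>0 < n\<close> by (intro mult_nonneg_nonneg opnorm_nonneg vnorm_nonneg) simp
  ultimately have b: "vnorm ?b \<le> opnorm C * vnorm v"
    by (rule power2_le_imp_le)
  have "dim_vec ?a = dim_vec ?b"
    using C U by (simp add: carrier_matD)
  then have "cmod (vinner ?a ?b) \<le> vnorm v * vnorm ?b"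
    using vinner_cauchy_schwarz \<open>vnorm ?a = vnorm v\<close> by metis
  also have "\<dots> \<le> vnorm v * (opnorm C * vnorm v)"
    using b vnorm_nonneg[of v] by (rule mult_left_mono)
  finally show ?thesis
    using \<open>vinner ?a ?b = vinner v (kron C U *\<^sub>v v)\<close> by (simp add: power2_eq_square mult_ac)
qed

section \<open>Matrix sums and quadratic forms\<close>

lemma msum_carrier: "msum N f I \<in> carrier_mat N N"
  unfolding msum_def by simp

lemma index_msum_mult_vec:
  assumes "\<And>i. i \<in> I \<Longrightarrow> f i \<in> carrier_mat N N" and "v \<in> carrier_vec N" and "p < N"
  shows "(msum N f I *\<^sub>v v) $ p = (\<Sum>i\<in>I. (f i *\<^sub>v v) $ p)"
proof -
  have "(msum N f I *\<^sub>v v) $ p = (\<Sum>q<N. msum N f I $$ (p, q) * v $ q)"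
    by (rule index_mult_mat_vec_sum[OF msum_carrier assms(2,3)])
  also have "\<dots> = (\<Sum>q<N. (\<Sum>i\<in>I. f i $$ (p, q)) * v $ q)"
    using assms(3) by (intro sum.cong refl) (simp add: msum_def)
  also have "\<dots> = (\<Sum>i\<in>I. \<Sum>q<N. f i $$ (p, q) * v $ q)"
    by (simp add: sum_distrib_right) (rule sum.swap)
  also have "\<dots> = (\<Sum>i\<in>I. (f i *\<^sub>v v) $ p)"
    by (intro sum.cong refl index_mult_mat_vec_sum[symmetric]) (use assms in auto)
  finally show ?thesis .
qed

lemma vinner_msum_mult_vec:
  assumes "\<And>i. i \<in> I \<Longrightarrow> f i \<in> carrier_mat N N" and v: "v \<in> carrier_vec N"
  shows "vinner v (msum N f I *\<^sub>v v) = (\<Sum>i\<in>I. vinner v (f i *\<^sub>v v))"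
proof -
  have "vinner v (msum N f I *\<^sub>v v) = (\<Sum>p<N. cnj (v $ p) * (\<Sum>i\<in>I. (f i *\<^sub>v v) $ p))"
    unfolding vinner_def using assms
    by (simp add: index_msum_mult_vec carrier_matD[OF msum_carrier] del: index_mult_mat_vec)
  also have "\<dots> = (\<Sum>i\<in>I. \<Sum>p<N. cnj (v $ p) * (f i *\<^sub>v v) $ p)"
    by (simp add: sum_distrib_left) (rule sum.swap)
  also have "\<dots> = (\<Sum>i\<in>I. vinner v (f i *\<^sub>v v))"
  proof (rule sum.cong[OF refl])
    fix i assume "i \<in> I"
    then have "dim_vec (f i *\<^sub>v v) = N"
      using assms(1) carrier_matD(1) by fastforce
    then show "(\<Sum>p<N. cnj (v $ p) * (f i *\<^sub>v v) $ p) = vinner v (f i *\<^sub>v v)"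
      unfolding vinner_def by simp
  qed
  finally show ?thesis .
qed

lemma vinner_add_adj_mult_vec:
  assumes M: "M \<in> carrier_mat N N" and v: "v \<in> carrier_vec N"
  shows "vinner v ((M + adj M) *\<^sub>v v) = vinner v (M *\<^sub>v v) + cnj (vinner v (M *\<^sub>v v))"
proof -
  have "vinner v ((M + adj M) *\<^sub>v v) = vinner v (M *\<^sub>v v) + vinner v (adj M *\<^sub>v v)"
    using M v adj_carrier[OF M] by (simp add: add_mult_distrib_mat_vec vinner_add_right)
  also have "vinner v (adj M *\<^sub>v v) = vinner (M *\<^sub>v v) v"
    by (rule vinner_adj_right[OF M v v])
  also have "\<dots> = cnj (vinner v (M *\<^sub>v v))"
    using M v by (metis cnj_vinner carrier_matD(1) carrier_vecD dim_mult_mat_vec)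
  finally show ?thesis .
qed

text \<open>Stated entrywise: vectors of all dimensions do not form a monoid, so \<open>\<Sum>\<^sub>i x\<^sub>i\<close> is
  not available as a vector.\<close>
lemma vinner_sum_add_self:
  assumes "finite I" and u: "dim_vec u = N" and g: "dim_vec g = N"
    and x: "\<And>i. i \<in> I \<Longrightarrow> dim_vec (x i) = N"
    and entries: "\<And>p. p < N \<Longrightarrow> u $ p = (\<Sum>i\<in>I. x i $ p) + g $ p"
  shows "vinner u u = (\<Sum>i\<in>I. \<Sum>j\<in>I. vinner (x i) (x j))
    + (\<Sum>i\<in>I. vinner (x i) g + cnj (vinner (x i) g)) + vinner g g"
proof -
  let ?y = "\<lambda>p. \<Sum>i\<in>I. x i $ p"
  have vinner_x: "vinner w (x i) = (\<Sum>p<N. cnj (w $ p) * x i $ p)" if "i \<in> I" for i w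
    unfolding vinner_def using x[OF that] by simp
  have "vinner u u = (\<Sum>p<N. cnj (?y p) * ?y p + cnj (?y p) * g $ p + cnj (g $ p) * ?y p
      + cnj (g $ p) * g $ p)"
    unfolding vinner_def u using entries by (intro sum.cong refl) (simp add: algebra_simps)
  also have "\<dots> = (\<Sum>p<N. cnj (?y p) * ?y p) + (\<Sum>p<N. cnj (?y p) * g $ p)
      + (\<Sum>p<N. cnj (g $ p) * ?y p) + (\<Sum>p<N. cnj (g $ p) * g $ p)"
    by (simp add: sum.distrib)
  also have "(\<Sum>p<N. cnj (?y p) * ?y p) = (\<Sum>i\<in>I. \<Sum>j\<in>I. vinner (x i) (x j))"
    by (simp add: vinner_x cnj_sum sum_product sum.swap[of _ "{..<N}"] cong: sum.cong)
  also have g_x: "(\<Sum>p<N. cnj (?y p) * g $ p) = (\<Sum>i\<in>I. vinner (x i) g)"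
    unfolding vinner_def g by (simp add: cnj_sum sum_distrib_right sum.swap[of _ "{..<N}"])
  also have "(\<Sum>p<N. cnj (g $ p) * ?y p) = cnj (\<Sum>p<N. cnj (?y p) * g $ p)"
    by (simp only: cnj_sum complex_cnj_mult complex_cnj_cnj mult.commute)
  also have "\<dots> = (\<Sum>i\<in>I. cnj (vinner (x i) g))"
    unfolding g_x by (rule cnj_sum)
  also have "(\<Sum>p<N. cnj (g $ p) * g $ p) = vinner g g"
    unfolding vinner_def g ..
  finally show ?thesis
    by (simp add: sum.distrib add_ac)
qed

lemma sum_offdiag_swap:
  fixes f :: "nat \<Rightarrow> nat \<Rightarrow> 'a :: comm_monoid_add"
  shows "(\<Sum>i<d. \<Sum>j\<in>{..<d} - {i}. f i j) = (\<Sum>i<d. \<Sum>j\<in>{..<d} - {i}. f j i)"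
proof -
  have "{..<d} - {i} = {j \<in> {..<d}. i \<noteq> j}" for i
    by auto
  then show ?thesis
    using sum.swap_restrict[of "{..<d}" "{..<d}" f "\<lambda>i j. i \<noteq> j"] by (simp add: eq_commute)
qed

section \<open>The Clifford spectral localizer\<close>

lemma Pm_eq_mat_diag: "Pm m = mat_diag (2 * m) (\<lambda>l. if l < m then 1 else 0)"
  unfolding Pm_def mat_diag_def by (rule eq_matI) auto

lemma Qm_eq_mat_diag: "Qm m = mat_diag (2 * m) (\<lambda>l. if m \<le> l then 1 else 0)"
  unfolding Qm_def mat_diag_def by (rule eq_matI) auto

lemma Pm_carrier: "Pm m \<in> carrier_mat (2 * m) (2 * m)"
  by (simp add: Pm_eq_mat_diag)

lemma Qm_carrier: "Qm m \<in> carrier_mat (2 * m) (2 * m)"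
  by (simp add: Qm_eq_mat_diag)

lemma adj_Pm_mult_Pm: "adj (Pm m) * Pm m = mat_diag (2 * m) (\<lambda>l. if l < m then 1 else 0)"
  unfolding Pm_eq_mat_diag adj_mat_diag mat_diag_diag by (rule arg_cong[of _ _ "mat_diag _"]) auto

lemma adj_Qm_mult_Qm: "adj (Qm m) * Qm m = mat_diag (2 * m) (\<lambda>l. if m \<le> l then 1 else 0)"
  unfolding Qm_eq_mat_diag adj_mat_diag mat_diag_diag by (rule arg_cong[of _ _ "mat_diag _"]) auto

lemma adj_Pm_mult_Qm: "adj (Pm m) * Qm m = mat_diag (2 * m) (\<lambda>_. 0)"
  unfolding Pm_eq_mat_diag Qm_eq_mat_diag adj_mat_diag mat_diag_diag
  by (rule arg_cong[of _ _ "mat_diag _"]) auto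

locale clifford_localizer =
  fixes n m d :: nat and \<Gamma> A :: "nat \<Rightarrow> complex mat" and B :: "complex mat"
    and lam :: "nat \<Rightarrow> real" and \<nu> :: complex
  assumes n_pos: "0 < n" and clifford: "clifford_rep m d \<Gamma>"
    and A: "\<forall>i<d. A i \<in> carrier_mat n n \<and> hermitian (A i)" and B: "B \<in> carrier_mat n n"
begin

abbreviation "X \<equiv> shiftA n A lam"
abbreviation "Y \<equiv> shiftB n B \<nu>"
abbreviation "L \<equiv> localizer n d m \<Gamma> A B lam \<nu>"
abbreviation "F \<equiv> Fmat n d m \<Gamma> A B lam \<nu>"

lemma Gamma_carrier: "i < d \<Longrightarrow> \<Gamma> i \<in> carrier_mat (2 * m) (2 * m)"
  using clifford unfolding clifford_rep_def by auto

lemma adj_Gamma: "i < d \<Longrightarrow> adj (\<Gamma> i) = \<Gamma> i"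
  using clifford unfolding clifford_rep_def hermitian_def by auto

lemma Gamma_sq: "i < d \<Longrightarrow> \<Gamma> i * \<Gamma> i = 1\<^sub>m (2 * m)"
  using clifford unfolding clifford_rep_def by auto

lemma Gamma_anticomm: "i < d \<Longrightarrow> j < d \<Longrightarrow> i \<noteq> j \<Longrightarrow> \<Gamma> j * \<Gamma> i = - (\<Gamma> i * \<Gamma> j)"
  using clifford unfolding clifford_rep_def by blast

lemma Gamma_mult_unitary:
  assumes "i < d" "j < d"
  shows "(\<Gamma> i * \<Gamma> j) * adj (\<Gamma> i * \<Gamma> j) = 1\<^sub>m (2 * m)"
proof -
  have "(\<Gamma> i * \<Gamma> j) * adj (\<Gamma> i * \<Gamma> j) = \<Gamma> i * ((\<Gamma> j * \<Gamma> j) * \<Gamma> i)"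
    using assms Gamma_carrier[of i] Gamma_carrier[of j]
    by (simp add: adj_mult adj_Gamma assoc_mult_mat[of _ "2 * m" "2 * m" _ "2 * m" _ "2 * m"])
  also have "\<dots> = 1\<^sub>m (2 * m)"
    using assms Gamma_carrier[of i] by (simp add: Gamma_sq)
  finally show ?thesis .
qed

lemma A_carrier: "i < d \<Longrightarrow> A i \<in> carrier_mat n n"
  using A by auto

lemma X_carrier: "i < d \<Longrightarrow> X i \<in> carrier_mat n n"
  using A_carrier unfolding shiftA_def by auto

lemma adj_X: "i < d \<Longrightarrow> adj (X i) = X i"
  using A_carrier[of i] A unfolding shiftA_def hermitian_def by (simp add: adj_shift)

lemma Y_carrier: "Y \<in> carrier_mat n n"
  using B unfolding shiftB_def by auto

lemma adj_Y_carrier: "adj Y \<in> carrier_mat n n"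
  using adj_carrier[OF Y_carrier] .

lemma localizer_carrier: "L \<in> carrier_mat (n * (2 * m)) (n * (2 * m))"
  unfolding localizer_def
  by (rule minus_carrier_mat[OF kron_carrier[OF adj_Y_carrier Qm_carrier]])

definition gamma_cross_term :: "complex vec \<Rightarrow> complex" where
  "gamma_cross_term v = (\<Sum>i<d. \<Sum>j\<in>{..<d} - {i}. vinner v (kron (X i * X j) (\<Gamma> i * \<Gamma> j) *\<^sub>v v))"

definition slice_energy :: "complex vec \<Rightarrow> nat \<Rightarrow> real" where
  "slice_energy v l = (\<Sum>i<d. (vnorm (X i *\<^sub>v slice n (2 * m) v l))\<^sup>2)
    + (if l < m then (vnorm (Y *\<^sub>v slice n (2 * m) v l))\<^sup>2
       else (vnorm (adj Y *\<^sub>v slice n (2 * m) v l))\<^sup>2)"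

context
  fixes v :: "complex vec"
  assumes v: "v \<in> carrier_vec (n * (2 * m))"
begin

lemma index_localizer_mult_vec:
  assumes p: "p < n * (2 * m)"
  shows "(L *\<^sub>v v) $ p = (\<Sum>i<d. (kron (X i) (\<Gamma> i) *\<^sub>v v) $ p)
    + (kron Y (Pm m) *\<^sub>v v - kron (adj Y) (Qm m) *\<^sub>v v) $ p"
proof -
  let ?K = "\<lambda>i. kron (X i) (\<Gamma> i)" and ?N = "n * (2 * m)"
  have K: "?K i \<in> carrier_mat ?N ?N" if "i \<in> {..<d}" for i
    using that X_carrier Gamma_carrier by (auto intro: kron_carrier)
  have M: "msum ?N ?K {..<d} \<in> carrier_mat ?N ?N"
    "kron Y (Pm m) \<in> carrier_mat ?N ?N" "kron (adj Y) (Qm m) \<in> carrier_mat ?N ?N"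
    by (auto intro!: msum_carrier kron_carrier Y_carrier adj_Y_carrier Pm_carrier Qm_carrier)
  have "L *\<^sub>v v = (msum ?N ?K {..<d} + kron Y (Pm m)) *\<^sub>v v - kron (adj Y) (Qm m) *\<^sub>v v"
    unfolding localizer_def mult.commute[of "2 * m" n]
    by (rule minus_mult_distrib_mat_vec[OF _ M(3) v]) (use M in simp)
  also have "(msum ?N ?K {..<d} + kron Y (Pm m)) *\<^sub>v v = msum ?N ?K {..<d} *\<^sub>v v + kron Y (Pm m) *\<^sub>v v"
    by (rule add_mult_distrib_mat_vec[OF M(1,2) v])
  finally have "L *\<^sub>v v = msum ?N ?K {..<d} *\<^sub>v v + kron Y (Pm m) *\<^sub>v v - kron (adj Y) (Qm m) *\<^sub>v v" .
  moreover have "(msum ?N ?K {..<d} *\<^sub>v v) $ p = (\<Sum>i<d. (?K i *\<^sub>v v) $ p)"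
    by (rule index_msum_mult_vec[OF K v p])
  moreover have "dim_row (msum ?N ?K {..<d}) = ?N" "dim_row (kron Y (Pm m)) = ?N"
    "dim_row (kron (adj Y) (Qm m)) = ?N"
    using M by auto
  ultimately show ?thesis
    using p by (simp del: index_mult_mat_vec)
qed

lemma vinner_Gamma_terms:
  assumes "i < d" "j < d"
  shows "vinner (kron (X i) (\<Gamma> i) *\<^sub>v v) (kron (X j) (\<Gamma> j) *\<^sub>v v)
    = vinner v (kron (X i * X j) (\<Gamma> i * \<Gamma> j) *\<^sub>v v)"
  using vinner_kron_mult_vec[OF X_carrier Gamma_carrier X_carrier Gamma_carrier v] assms
  by (simp add: adj_X adj_Gamma)

lemma power2_vnorm_Gamma_term:
  assumes "i < d"
  shows "(vnorm (kron (X i) (\<Gamma> i) *\<^sub>v v))\<^sup>2 = (\<Sum>l<2 * m. (vnorm (X i *\<^sub>v slice n (2 * m) v l))\<^sup>2)"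
  using power2_vnorm_kron_mult_vec[OF X_carrier Gamma_carrier v] assms
  by (simp add: adj_Gamma Gamma_sq)

lemma vinner_Gamma_term_Pm:
  assumes "i < d"
  shows "vinner (kron (X i) (\<Gamma> i) *\<^sub>v v) (kron Y (Pm m) *\<^sub>v v)
    = vinner v (kron (X i * Y) (\<Gamma> i * Pm m) *\<^sub>v v)"
  using vinner_kron_mult_vec[OF X_carrier Gamma_carrier Y_carrier Pm_carrier v] assms
  by (simp add: adj_X adj_Gamma)

lemma vinner_Gamma_term_Qm:
  assumes "i < d"
  shows "vinner (kron (X i) (\<Gamma> i) *\<^sub>v v) (kron (adj Y) (Qm m) *\<^sub>v v)
    = vinner v (kron (X i * adj Y) (\<Gamma> i * Qm m) *\<^sub>v v)"
  using vinner_kron_mult_vec[OF X_carrier Gamma_carrier adj_Y_carrier Qm_carrier v] assms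
  by (simp add: adj_X adj_Gamma)

lemma vinner_Pm_term_Qm_term: "vinner (kron Y (Pm m) *\<^sub>v v) (kron (adj Y) (Qm m) *\<^sub>v v) = 0"
  using vinner_kron_mult_vec_diag[OF Y_carrier Pm_carrier adj_Y_carrier Qm_carrier v adj_Pm_mult_Qm]
  by simp

lemma power2_vnorm_Pm_term:
  "(vnorm (kron Y (Pm m) *\<^sub>v v))\<^sup>2
    = (\<Sum>l<2 * m. if l < m then (vnorm (Y *\<^sub>v slice n (2 * m) v l))\<^sup>2 else 0)"
  using arg_cong[OF vinner_kron_mult_vec_diag[OF Y_carrier Pm_carrier Y_carrier Pm_carrier v
        adj_Pm_mult_Pm], of Re]
  by (simp add: vinner_self Re_sum if_distrib[of "\<lambda>x. x * _"] if_distrib[of Re]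
      del: of_real_power cong: if_cong)

lemma power2_vnorm_Qm_term:
  "(vnorm (kron (adj Y) (Qm m) *\<^sub>v v))\<^sup>2
    = (\<Sum>l<2 * m. if m \<le> l then (vnorm (adj Y *\<^sub>v slice n (2 * m) v l))\<^sup>2 else 0)"
  using arg_cong[OF vinner_kron_mult_vec_diag[OF adj_Y_carrier Qm_carrier adj_Y_carrier Qm_carrier v
        adj_Qm_mult_Qm], of Re]
  by (simp add: vinner_self Re_sum if_distrib[of "\<lambda>x. x * _"] if_distrib[of Re]
      del: of_real_power cong: if_cong)

lemma vinner_msum_hermitian_parts:
  assumes "\<And>i. i < d \<Longrightarrow> M i \<in> carrier_mat (n * (2 * m)) (n * (2 * m))"
  shows "vinner v (msum (n * (2 * m)) (\<lambda>i. M i + adj (M i)) {..<d} *\<^sub>v v)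
    = (\<Sum>i<d. vinner v (M i *\<^sub>v v) + cnj (vinner v (M i *\<^sub>v v)))"
proof -
  have "vinner v (msum (n * (2 * m)) (\<lambda>i. M i + adj (M i)) {..<d} *\<^sub>v v)
      = (\<Sum>i<d. vinner v ((M i + adj (M i)) *\<^sub>v v))"
    using assms v by (intro vinner_msum_mult_vec add_carrier_mat adj_carrier) auto
  also have "\<dots> = (\<Sum>i<d. vinner v (M i *\<^sub>v v) + cnj (vinner v (M i *\<^sub>v v)))"
    using assms v by (intro sum.cong refl vinner_add_adj_mult_vec) auto
  finally show ?thesis .
qed

lemma vinner_Fmat:
  "vinner v (F *\<^sub>v v) = (\<Sum>i<d.
      (vinner v (kron (X i * Y) (\<Gamma> i * Pm m) *\<^sub>v v) - vinner v (kron (X i * adj Y) (\<Gamma> i * Qm m) *\<^sub>v v))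
    + cnj (vinner v (kron (X i * Y) (\<Gamma> i * Pm m) *\<^sub>v v) - vinner v (kron (X i * adj Y) (\<Gamma> i * Qm m) *\<^sub>v v)))"
proof -
  let ?N = "n * (2 * m)"
  let ?G = "\<lambda>i. kron (X i * Y) (\<Gamma> i * Pm m)" and ?H = "\<lambda>i. kron (X i * adj Y) (\<Gamma> i * Qm m)"
  have carriers: "?G i \<in> carrier_mat ?N ?N" "?H i \<in> carrier_mat ?N ?N" if "i < d" for i
    using that X_carrier Y_carrier adj_Y_carrier Gamma_carrier Pm_carrier Qm_carrier
    by (auto intro!: kron_carrier mult_carrier_mat)
  have "F = msum ?N (\<lambda>i. ?G i + adj (?G i)) {..<d} - msum ?N (\<lambda>i. ?H i + adj (?H i)) {..<d}"
    unfolding Fmat_def Let_def mult.commute[of "2 * m" n] ..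
  then have "vinner v (F *\<^sub>v v) = vinner v (msum ?N (\<lambda>i. ?G i + adj (?G i)) {..<d} *\<^sub>v v)
      - vinner v (msum ?N (\<lambda>i. ?H i + adj (?H i)) {..<d} *\<^sub>v v)"
    using v by (simp add: minus_mult_distrib_mat_vec[OF msum_carrier msum_carrier v] vinner_diff_right
        carrier_matD[OF msum_carrier])
  also have "\<dots> = (\<Sum>i<d. vinner v (?G i *\<^sub>v v) + cnj (vinner v (?G i *\<^sub>v v)))
      - (\<Sum>i<d. vinner v (?H i *\<^sub>v v) + cnj (vinner v (?H i *\<^sub>v v)))"
    using carriers by (simp add: vinner_msum_hermitian_parts)
  finally show ?thesis
    by (simp add: sum_subtractf[symmetric] algebra_simps)
qed

lemma sum_slice_energy:
  "(\<Sum>l<2 * m. slice_energy v l) = (\<Sum>i<d. (vnorm (kron (X i) (\<Gamma> i) *\<^sub>v v))\<^sup>2)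
    + (vnorm (kron Y (Pm m) *\<^sub>v v))\<^sup>2 + (vnorm (kron (adj Y) (Qm m) *\<^sub>v v))\<^sup>2"
proof -
  let ?s = "slice n (2 * m) v"
  have "slice_energy v l = (\<Sum>i<d. (vnorm (X i *\<^sub>v ?s l))\<^sup>2)
      + ((if l < m then (vnorm (Y *\<^sub>v ?s l))\<^sup>2 else 0) + (if m \<le> l then (vnorm (adj Y *\<^sub>v ?s l))\<^sup>2 else 0))"
    for l
    unfolding slice_energy_def by simp
  then have "(\<Sum>l<2 * m. slice_energy v l) = (\<Sum>l<2 * m. \<Sum>i<d. (vnorm (X i *\<^sub>v ?s l))\<^sup>2)
      + ((vnorm (kron Y (Pm m) *\<^sub>v v))\<^sup>2 + (vnorm (kron (adj Y) (Qm m) *\<^sub>v v))\<^sup>2)"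
    unfolding power2_vnorm_Pm_term power2_vnorm_Qm_term by (simp only: sum.distrib)
  also have "(\<Sum>l<2 * m. \<Sum>i<d. (vnorm (X i *\<^sub>v ?s l))\<^sup>2) = (\<Sum>i<d. (vnorm (kron (X i) (\<Gamma> i) *\<^sub>v v))\<^sup>2)"
    by (subst sum.swap) (simp add: power2_vnorm_Gamma_term)
  finally show ?thesis
    by simp
qed

lemma vinner_localizer_mult_vec:
  "vinner (L *\<^sub>v v) (L *\<^sub>v v) = of_real (\<Sum>l<2 * m. slice_energy v l) + gamma_cross_term v
    + vinner v (F *\<^sub>v v)"
proof -
  let ?N = "n * (2 * m)"
  let ?x = "\<lambda>i. kron (X i) (\<Gamma> i) *\<^sub>v v"
    and ?y = "kron Y (Pm m) *\<^sub>v v" and ?z = "kron (adj Y) (Qm m) *\<^sub>v v"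
  have dims: "dim_vec (L *\<^sub>v v) = ?N" "dim_vec ?y = ?N" "dim_vec ?z = ?N"
    "\<And>i. i < d \<Longrightarrow> dim_vec (?x i) = ?N"
    using carrier_matD(1)[OF localizer_carrier] carrier_matD(1)[OF kron_carrier[OF Y_carrier Pm_carrier]]
      carrier_matD(1)[OF kron_carrier[OF adj_Y_carrier Qm_carrier]]
      carrier_matD(1)[OF kron_carrier[OF X_carrier Gamma_carrier]] by simp_all
  have "vinner (L *\<^sub>v v) (L *\<^sub>v v) = (\<Sum>i<d. \<Sum>j<d. vinner (?x i) (?x j))
      + (\<Sum>i<d. vinner (?x i) (?y - ?z) + cnj (vinner (?x i) (?y - ?z))) + vinner (?y - ?z) (?y - ?z)"
    by (rule vinner_sum_add_self) (use dims index_localizer_mult_vec in auto)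
  also have "(\<Sum>i<d. \<Sum>j<d. vinner (?x i) (?x j))
      = of_real (\<Sum>i<d. (vnorm (?x i))\<^sup>2) + gamma_cross_term v"
  proof -
    have "(\<Sum>j<d. vinner (?x i) (?x j)) = vinner (?x i) (?x i)
        + (\<Sum>j\<in>{..<d} - {i}. vinner v (kron (X i * X j) (\<Gamma> i * \<Gamma> j) *\<^sub>v v))" if "i < d" for i
      using that sum.remove[of "{..<d}" i "\<lambda>j. vinner (?x i) (?x j)"] by (simp add: vinner_Gamma_terms)
    then show ?thesis
      unfolding gamma_cross_term_def by (simp add: vinner_self sum.distrib)
  qed
  also have "(\<Sum>i<d. vinner (?x i) (?y - ?z) + cnj (vinner (?x i) (?y - ?z))) = vinner v (F *\<^sub>v v)"
    unfolding vinner_Fmat using dims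
    by (intro sum.cong refl) (simp add: vinner_diff_right vinner_Gamma_term_Pm vinner_Gamma_term_Qm)
  also have "vinner (?y - ?z) (?y - ?z) = vinner ?y ?y - vinner ?y ?z - (vinner ?z ?y - vinner ?z ?z)"
    using dims by (simp add: vinner_diff_left vinner_diff_right)
  also have "\<dots> = of_real ((vnorm ?y)\<^sup>2 + (vnorm ?z)\<^sup>2)"
    using dims vinner_Pm_term_Qm_term cnj_vinner[of ?y ?z] by (simp add: vinner_self)
  finally show ?thesis
    unfolding sum_slice_energy by simp
qed

lemma cmod_gamma_cross_term_le:
  "cmod (gamma_cross_term v)
    \<le> (\<Sum>i<d. \<Sum>k\<in>{..<d} - {i}. opnorm (A i * A k - A k * A i)) * (vnorm v)\<^sup>2"
proof -
  let ?b = "\<lambda>M i j. vinner v (kron M (\<Gamma> i * \<Gamma> j) *\<^sub>v v)"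
  let ?S = "gamma_cross_term v"
  have K: "kron M (\<Gamma> i * \<Gamma> j) \<in> carrier_mat (n * (2 * m)) (n * (2 * m))"
    if "M \<in> carrier_mat n n" "i < d" "j < d" for M i j
    using that Gamma_carrier by (intro kron_carrier mult_carrier_mat) auto
  have antisym: "?b (X j * X i) j i = - ?b (X j * X i) i j" if "i < d" "j < d" "i \<noteq> j" for i j
  proof -
    have XX: "X j * X i \<in> carrier_mat n n"
      using mult_carrier_mat[OF X_carrier X_carrier] that by blast
    have "kron (X j * X i) (\<Gamma> j * \<Gamma> i) = - kron (X j * X i) (\<Gamma> i * \<Gamma> j)"
      using Gamma_anticomm[OF that] by (simp add: kron_uminus_right)
    then show ?thesis
      using carrier_matD(2)[OF K[OF XX that(1,2)]] v by (simp add: vinner_uminus_right)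
  qed
  have commutator: "?b (X i * X j) i j - ?b (X j * X i) i j = ?b (A i * A j - A j * A i) i j"
    if "i < d" "j < d" for i j
  proof -
    have XX: "X i * X j \<in> carrier_mat n n" "X j * X i \<in> carrier_mat n n"
      using mult_carrier_mat[OF X_carrier X_carrier] that by blast+
    have "kron (X i * X j) (\<Gamma> i * \<Gamma> j) - kron (X j * X i) (\<Gamma> i * \<Gamma> j)
        = kron (A i * A j - A j * A i) (\<Gamma> i * \<Gamma> j)"
      using kron_diff_left[OF XX] commutator_shift[OF A_carrier[OF that(1)] A_carrier[OF that(2)]]
      unfolding shiftA_def by simp
    then show ?thesis
      using minus_mult_distrib_mat_vec[OF K[OF XX(1) that] K[OF XX(2) that] v]
        vinner_diff_right[of "kron (X i * X j) (\<Gamma> i * \<Gamma> j) *\<^sub>v v"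
          "kron (X j * X i) (\<Gamma> i * \<Gamma> j) *\<^sub>v v" v]
        carrier_matD[OF X_carrier[OF that(1)]] carrier_matD[OF X_carrier[OF that(2)]]
        carrier_matD[OF Gamma_carrier[OF that(1)]]
      by simp
  qed
  have swapped: "?S = (\<Sum>i<d. \<Sum>j\<in>{..<d} - {i}. - ?b (X j * X i) i j)"
    unfolding gamma_cross_term_def by (subst sum_offdiag_swap) (intro sum.cong refl antisym, auto)
  have "?S + ?S = (\<Sum>i<d. \<Sum>j\<in>{..<d} - {i}. ?b (X i * X j) i j)
      + (\<Sum>i<d. \<Sum>j\<in>{..<d} - {i}. - ?b (X j * X i) i j)"
    by (subst (2) swapped) (simp add: gamma_cross_term_def)
  also have "\<dots> = (\<Sum>i<d. \<Sum>j\<in>{..<d} - {i}. ?b (A i * A j - A j * A i) i j)"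
    by (simp add: sum.distrib[symmetric]) (intro sum.cong refl commutator, auto)
  finally have "cmod (?S + ?S) \<le> (\<Sum>i<d. \<Sum>j\<in>{..<d} - {i}. cmod (?b (A i * A j - A j * A i) i j))"
    by (simp only:) (rule order_trans[OF norm_sum sum_mono[OF norm_sum]])
  also have "\<dots> \<le> (\<Sum>i<d. \<Sum>j\<in>{..<d} - {i}. opnorm (A i * A j - A j * A i) * (vnorm v)\<^sup>2)"
  proof (intro sum_mono)
    fix i j assume "i \<in> {..<d}" "j \<in> {..<d} - {i}"
    then have "i < d" "j < d"
      by auto
    have "A i * A j - A j * A i \<in> carrier_mat n n"
      using A_carrier[OF \<open>i < d\<close>] A_carrier[OF \<open>j < d\<close>] by auto
    then show "cmod (?b (A i * A j - A j * A i) i j) \<le> opnorm (A i * A j - A j * A i) * (vnorm v)\<^sup>2"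
      using Gamma_carrier[OF \<open>i < d\<close>] Gamma_carrier[OF \<open>j < d\<close>]
      by (intro cmod_vinner_kron_unitary_le[OF _ _ Gamma_mult_unitary[OF \<open>i < d\<close> \<open>j < d\<close>] v n_pos])
        auto
  qed
  finally have "2 * cmod ?S \<le> (\<Sum>i<d. \<Sum>j\<in>{..<d} - {i}. opnorm (A i * A j - A j * A i) * (vnorm v)\<^sup>2)"
    by simp
  then have "cmod ?S \<le> (\<Sum>i<d. \<Sum>j\<in>{..<d} - {i}. opnorm (A i * A j - A j * A i) * (vnorm v)\<^sup>2)"
    using norm_ge_zero[of ?S] by linarith
  then show ?thesis
    by (simp add: sum_distrib_right)
qed

lemma sum_slice_energy_le:
  assumes "vnorm v = 1"
  shows "(\<Sum>l<2 * m. slice_energy v l)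
    \<le> (vnorm (L *\<^sub>v v))\<^sup>2 + (\<Sum>i<d. \<Sum>k\<in>{..<d} - {i}. opnorm (A i * A k - A k * A i)) + opnorm F"
proof -
  have F: "F \<in> carrier_mat (n * (2 * m)) (n * (2 * m))"
    unfolding Fmat_def Let_def mult.commute[of "2 * m" n] by (rule minus_carrier_mat[OF msum_carrier])
  have "(vnorm (L *\<^sub>v v))\<^sup>2 = (\<Sum>l<2 * m. slice_energy v l) + Re (gamma_cross_term v)
      + Re (vinner v (F *\<^sub>v v))"
    using arg_cong[OF vinner_localizer_mult_vec, of Re] by (simp add: vinner_self)
  moreover have "- (\<Sum>i<d. \<Sum>k\<in>{..<d} - {i}. opnorm (A i * A k - A k * A i)) \<le> Re (gamma_cross_term v)"
    using cmod_gamma_cross_term_le assms abs_Re_le_cmod[of "gamma_cross_term v"] by simp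
  moreover have "cmod (vinner v (F *\<^sub>v v)) \<le> opnorm F"
    using vinner_cauchy_schwarz[of v "F *\<^sub>v v"] vnorm_mult_vec_le_opnorm[of v F] F v assms by simp
  then have "- opnorm F \<le> Re (vinner v (F *\<^sub>v v))"
    using abs_Re_le_cmod[of "vinner v (F *\<^sub>v v)"] by simp
  ultimately show ?thesis
    by linarith
qed

lemma exists_unit_vec_joint_approx:
  assumes "vnorm v = 1"
  defines "E \<equiv> (vnorm (L *\<^sub>v v))\<^sup>2 + (\<Sum>i<d. \<Sum>k\<in>{..<d} - {i}. opnorm (A i * A k - A k * A i)) + opnorm F"
  shows "\<exists>\<psi>\<in>carrier_vec n. vnorm \<psi> = 1 \<and>
    ((\<Sum>i<d. (vnorm (A i *\<^sub>v \<psi> - complex_of_real (lam i) \<cdot>\<^sub>v \<psi>))\<^sup>2) + (vnorm (B *\<^sub>v \<psi> - \<nu> \<cdot>\<^sub>v \<psi>))\<^sup>2 \<le> E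
     \<or> (\<Sum>i<d. (vnorm (A i *\<^sub>v \<psi> - complex_of_real (lam i) \<cdot>\<^sub>v \<psi>))\<^sup>2)
       + (vnorm (adj B *\<^sub>v \<psi> - cnj \<nu> \<cdot>\<^sub>v \<psi>))\<^sup>2 \<le> E)"
proof -
  let ?s = "slice n (2 * m) v"
  have "(\<Sum>l<2 * m. (vnorm (?s l))\<^sup>2) = 1"
    using power2_vnorm_eq_sum_slice[OF v] assms(1) by simp
  moreover have "(\<Sum>l<2 * m. slice_energy v l) \<le> E"
    using sum_slice_energy_le[OF assms(1)] unfolding E_def .
  moreover have "0 \<le> slice_energy v l" for l
    unfolding slice_energy_def by (simp add: sum_nonneg)
  ultimately obtain l where "l < 2 * m" and pos: "0 < (vnorm (?s l))\<^sup>2"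
    and le: "slice_energy v l \<le> E * (vnorm (?s l))\<^sup>2"
    using exists_le_weighted[of "{..<2 * m}" "\<lambda>l. (vnorm (?s l))\<^sup>2" "slice_energy v" E] by auto
  define r where "r = 1 / vnorm (?s l)"
  define \<psi> where "\<psi> = complex_of_real r \<cdot>\<^sub>v ?s l"
  have "vnorm (?s l) \<noteq> 0"
    using pos by auto
  then have "vnorm \<psi> = 1"
    unfolding \<psi>_def r_def by (rule vnorm_normalize)
  have "r\<^sup>2 * (vnorm (?s l))\<^sup>2 = 1"
    unfolding r_def using \<open>vnorm (?s l) \<noteq> 0\<close> by (simp add: power_divide)
  have "(vnorm (A i *\<^sub>v \<psi> - complex_of_real (lam i) \<cdot>\<^sub>v \<psi>))\<^sup>2 = r\<^sup>2 * (vnorm (X i *\<^sub>v ?s l))\<^sup>2"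
    if "i < d" for i
    unfolding \<psi>_def shiftA_def by (rule power2_vnorm_shift_smult[OF A_carrier[OF that] slice_carrier])
  moreover have "(vnorm (B *\<^sub>v \<psi> - \<nu> \<cdot>\<^sub>v \<psi>))\<^sup>2 = r\<^sup>2 * (vnorm (Y *\<^sub>v ?s l))\<^sup>2"
    unfolding \<psi>_def shiftB_def by (rule power2_vnorm_shift_smult[OF B slice_carrier])
  moreover have "(vnorm (adj B *\<^sub>v \<psi> - cnj \<nu> \<cdot>\<^sub>v \<psi>))\<^sup>2 = r\<^sup>2 * (vnorm (adj Y *\<^sub>v ?s l))\<^sup>2"
    unfolding \<psi>_def shiftB_def adj_shift[OF B]
    by (rule power2_vnorm_shift_smult[OF adj_carrier[OF B] slice_carrier])
  ultimately have "(\<Sum>i<d. (vnorm (A i *\<^sub>v \<psi> - complex_of_real (lam i) \<cdot>\<^sub>v \<psi>))\<^sup>2)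
      + (if l < m then (vnorm (B *\<^sub>v \<psi> - \<nu> \<cdot>\<^sub>v \<psi>))\<^sup>2 else (vnorm (adj B *\<^sub>v \<psi> - cnj \<nu> \<cdot>\<^sub>v \<psi>))\<^sup>2)
      = r\<^sup>2 * slice_energy v l"
    unfolding slice_energy_def by (simp add: sum_distrib_left distrib_left)
  also have "\<dots> \<le> E"
    using le \<open>r\<^sup>2 * (vnorm (?s l))\<^sup>2 = 1\<close> mult_left_mono[OF le, of "r\<^sup>2"] by (simp add: mult_ac)
  finally show ?thesis
    using \<open>vnorm \<psi> = 1\<close> unfolding \<psi>_def by (cases "l < m") auto
qed

end

end

theorem mainTheorem2:
  fixes n d m :: nat and \<Gamma> A :: "nat \<Rightarrow> complex mat" and B :: "complex mat"
    and lam :: "nat \<Rightarrow> real" and \<nu> :: complex and \<epsilon>\<^sub>1 \<epsilon>\<^sub>2 :: real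
  assumes "0 < n" "0 < d" "0 < m"
    and "clifford_rep m d \<Gamma>"
    and "\<forall>i<d. A i \<in> carrier_mat n n \<and> hermitian (A i)"
    and "B \<in> carrier_mat n n"
    and "\<forall>i\<ge>d. lam i = 0"
    and "\<epsilon>\<^sub>1 \<ge> 0" and "(lam, \<nu>) \<in> clifford_pseudospectrum n d m \<Gamma> \<epsilon>\<^sub>1 A B"
    and "\<epsilon>\<^sub>2 \<ge> 0"
    and "(\<Sum>i<d. \<Sum>k\<in>{..<d} - {i}. opnorm (A i * A k - A k * A i))
           + opnorm (Fmat n d m \<Gamma> A B lam \<nu>) \<le> \<epsilon>\<^sub>2"
  shows "\<exists>\<psi> \<in> carrier_vec n. vnorm \<psi> = 1 \<and>
    (sqrt ((\<Sum>i<d. (vnorm (A i *\<^sub>v \<psi> - complex_of_real (lam i) \<cdot>\<^sub>v \<psi>))\<^sup>2)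
           + (vnorm (B *\<^sub>v \<psi> - \<nu> \<cdot>\<^sub>v \<psi>))\<^sup>2)
       \<le> sqrt (real (2*m)) * sqrt (\<epsilon>\<^sub>1\<^sup>2 + \<epsilon>\<^sub>2)
     \<or> sqrt ((\<Sum>i<d. (vnorm (A i *\<^sub>v \<psi> - complex_of_real (lam i) \<cdot>\<^sub>v \<psi>))\<^sup>2)
           + (vnorm (adj B *\<^sub>v \<psi> - cnj \<nu> \<cdot>\<^sub>v \<psi>))\<^sup>2)
       \<le> sqrt (real (2*m)) * sqrt (\<epsilon>\<^sub>1\<^sup>2 + \<epsilon>\<^sub>2))"
proof -
  interpret clifford_localizer n m d \<Gamma> A B lam \<nu>
    using assms by unfold_locales auto
  have "sigma_min L \<le> \<epsilon>\<^sub>1"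
    using assms(9) unfolding clifford_pseudospectrum_def clifford_radial_gap_def by simp
  then obtain v where v: "v \<in> carrier_vec (n * (2 * m))" "vnorm v = 1" "(vnorm (L *\<^sub>v v))\<^sup>2 \<le> 2 * \<epsilon>\<^sub>1\<^sup>2"
    using exists_unit_vec_le_sigma_min[OF localizer_carrier _ assms(8)] assms(1,3) by auto
  have "(vnorm (L *\<^sub>v v))\<^sup>2 + (\<Sum>i<d. \<Sum>k\<in>{..<d} - {i}. opnorm (A i * A k - A k * A i)) + opnorm F
      \<le> real (2 * m) * (\<epsilon>\<^sub>1\<^sup>2 + \<epsilon>\<^sub>2)"
    using v(3) assms(3,10,11) mult_right_mono[of 2 "real (2 * m)" "\<epsilon>\<^sub>1\<^sup>2 + \<epsilon>\<^sub>2"] by simp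
  moreover have "sqrt x \<le> sqrt (real (2 * m)) * sqrt (\<epsilon>\<^sub>1\<^sup>2 + \<epsilon>\<^sub>2)"
    if "x \<le> real (2 * m) * (\<epsilon>\<^sub>1\<^sup>2 + \<epsilon>\<^sub>2)" for x
    using that by (simp add: real_sqrt_mult[symmetric])
  ultimately show ?thesis
    using exists_unit_vec_joint_approx[OF v(1,2)] by (meson order_trans)
qed

end
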